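(* Let $M$ be a multiplication $L$-module and $\delta_1(A)=(\sqrt{(A:I_M)})I_M$. Then for every proper element $N\in M$, $N\leqslant\delta_1\big((N:I_M)N\big)$, and equality holds if $N$ is prime.
   Context: $L$ is a multiplicative lattice (complete lattice with commutative, associative multiplication distributing over arbitrary joins, identity $1$), compactly generated, $1$ compact, finite products of compact elements compact; $L_\ast$ = compact elements. An $L$-module is a complete lattice $M$ (least $O_M$, greatest $I_M$) with product $aB\in M$ satisfying $(\bigvee a_\alpha)A=\bigvee(a_\alpha A)$, $a(\bigvee A_\alpha)=\bigvee(aA_\alpha)$, $(ab)A=a(bA)$, $1A=A$, $0A=O_M$. $(A:B)=\bigvee\{x\in L:xB\leqslant A\}$; $\sqrt a=\bigvee\{x\in L_\ast:x^n\leqslant a\text{ for some }n\in\mathbb Z_+\}$. $M$ is a multiplication module if every element of $M$ is $aI_M$ for some $a\in L$. Proper means $<I_M$. A proper $N\in M$ is prime if $aX\leqslant N$ ($a\in L$, $X\in M$) implies $X\leqslant N$ or $aI_M\leqslant N$. *)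

theory Defs
  imports Main
begin

text \<open>Multiplicative lattices: the carrier is a type 'a that is a complete lattice and a
  commutative monoid (multiplication commutative, associative, with identity 1).
  The least element 0 of L is bot.\<close>

definition compact_el :: "'a::complete_lattice \<Rightarrow> bool" where
  "compact_el x \<longleftrightarrow> (\<forall>S. x \<le> Sup S \<longrightarrow> (\<exists>T. finite T \<and> T \<subseteq> S \<and> x \<le> Sup T))"

definition mult_lattice :: "('a::{complete_lattice, comm_monoid_mult}) itself \<Rightarrow> bool" where
  "mult_lattice _ \<longleftrightarrow>
     (\<forall>(a::'a) S. a * Sup S = Sup ((\<lambda>s. a * s) ` S)) \<and>
     (\<forall>(x::'a). x = Sup {c. compact_el c \<and> c \<le> x}) \<and>
     compact_el (1::'a) \<and>
     (\<forall>(a::'a) b. compact_el a \<longrightarrow> compact_el b \<longrightarrow> compact_el (a * b))"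

definition L_module :: "('a::{complete_lattice, comm_monoid_mult} \<Rightarrow> 'm::complete_lattice \<Rightarrow> 'm) \<Rightarrow> bool" where
  "L_module act \<longleftrightarrow>
     (\<forall>S A. act (Sup S) A = Sup ((\<lambda>a. act a A) ` S)) \<and>
     (\<forall>a T. act a (Sup T) = Sup (act a ` T)) \<and>
     (\<forall>a b A. act (a * b) A = act a (act b A)) \<and>
     (\<forall>A. act 1 A = A) \<and>
     (\<forall>A. act bot A = bot)"

definition mcolon :: "('a::{complete_lattice, comm_monoid_mult} \<Rightarrow> 'm::complete_lattice \<Rightarrow> 'm) \<Rightarrow> 'm \<Rightarrow> 'm \<Rightarrow> 'a" where
  "mcolon act A B = Sup {x. act x B \<le> A}"

definition lrad :: "'a::{complete_lattice, comm_monoid_mult} \<Rightarrow> 'a" where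
  "lrad a = Sup {x. compact_el x \<and> (\<exists>n::nat. n \<ge> 1 \<and> x ^ n \<le> a)}"

definition multiplication_module :: "('a::{complete_lattice, comm_monoid_mult} \<Rightarrow> 'm::complete_lattice \<Rightarrow> 'm) \<Rightarrow> bool" where
  "multiplication_module act \<longleftrightarrow> (\<forall>N. \<exists>a. N = act a top)"

definition prime_el :: "('a::{complete_lattice, comm_monoid_mult} \<Rightarrow> 'm::complete_lattice \<Rightarrow> 'm) \<Rightarrow> 'm \<Rightarrow> bool" where
  "prime_el act N \<longleftrightarrow> N < top \<and> (\<forall>a X. act a X \<le> N \<longrightarrow> X \<le> N \<or> act a top \<le> N)"

definition delta1 :: "('a::{complete_lattice, comm_monoid_mult} \<Rightarrow> 'm::complete_lattice \<Rightarrow> 'm) \<Rightarrow> 'm \<Rightarrow> 'm" where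
  "delta1 act A = act (lrad (mcolon act A top)) top"

end

theory Submission
  imports Defs
begin

text \<open>In a multiplication module every element satisfies \<open>N = (N:I)I\<close>, so with \<open>a = (N:I)\<close>
  we get \<open>(N:I)N = a\<^sup>2 I\<close>. Hence \<open>a\<^sup>2 \<le> ((N:I)N : I)\<close>, which puts \<open>a\<close> below the radical
  of that residual and gives \<open>N = aI \<le> \<delta>\<^sub>1((N:I)N)\<close>. Conversely, if \<open>N\<close> is prime then
  \<open>x\<^sup>n I \<le> (N:I)N \<le> N\<close> forces \<open>xI \<le> N\<close>, so every compact element of the radical
  multiplies \<open>I\<close> into \<open>N\<close>, and \<open>\<delta>\<^sub>1((N:I)N) \<le> N\<close>.\<close>

lemma L_module_act_mult:
  assumes "L_module act" shows "act (a * b) X = act a (act b X)"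
  using assms unfolding L_module_def by blast

lemma L_module_act_mono_left:
  assumes "L_module act" "a \<le> b" shows "act a X \<le> act b X"
proof -
  have "act (Sup {a, b}) X = Sup ((\<lambda>a. act a X) ` {a, b})"
    using assms(1) unfolding L_module_def by blast
  with assms(2) have "act b X = sup (act a X) (act b X)" by (simp add: sup_absorb2)
  then show ?thesis by (metis sup.cobounded1)
qed

lemma L_module_act_mono_right:
  assumes "L_module act" "X \<le> Y" shows "act a X \<le> act a Y"
proof -
  have "act a (Sup {X, Y}) = Sup (act a ` {X, Y})"
    using assms(1) unfolding L_module_def by blast
  with assms(2) have "act a Y = sup (act a X) (act a Y)" by (simp add: sup_absorb2)
  then show ?thesis by (metis sup.cobounded1)
qed

lemma mult_lattice_mult_left_mono:
  fixes a b c :: "'a::{complete_lattice, comm_monoid_mult}"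
  assumes "mult_lattice TYPE('a)" "a \<le> b" shows "c * a \<le> c * b"
proof -
  have "c * Sup {a, b} = Sup ((\<lambda>s. c * s) ` {a, b})"
    using assms(1) unfolding mult_lattice_def by blast
  with assms(2) have "c * b = sup (c * a) (c * b)" by (simp add: sup_absorb2)
  then show ?thesis by (metis sup.cobounded1)
qed

lemma mult_lattice_power_mono:
  fixes a b :: "'a::{complete_lattice, comm_monoid_mult}"
  assumes "mult_lattice TYPE('a)" "a \<le> b" shows "a ^ n \<le> b ^ n"
proof (induction n)
  case 0 then show ?case by simp
next
  case (Suc n)
  have "a * a ^ n \<le> a * b ^ n" by (rule mult_lattice_mult_left_mono[OF assms(1) Suc.IH])
  also have "\<dots> = b ^ n * a" by (simp add: mult.commute)
  also have "\<dots> \<le> b ^ n * b" by (rule mult_lattice_mult_left_mono[OF assms])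
  finally show ?case by (simp add: mult.commute)
qed

lemma le_mcolon_iff:
  assumes "L_module act" shows "x \<le> mcolon act A B \<longleftrightarrow> act x B \<le> A"
proof
  have "act (mcolon act A B) B = Sup ((\<lambda>x. act x B) ` {x. act x B \<le> A})"
    using assms unfolding L_module_def mcolon_def by blast
  also have "\<dots> \<le> A" by (rule Sup_least) auto
  finally have "act (mcolon act A B) B \<le> A" .
  then show "act x B \<le> A" if "x \<le> mcolon act A B"
    by (rule order.trans[OF L_module_act_mono_left[OF assms that]])
next
  show "act x B \<le> A \<Longrightarrow> x \<le> mcolon act A B"
    unfolding mcolon_def by (auto intro: Sup_upper)
qed

lemma act_mcolon_le:
  assumes "L_module act" shows "act (mcolon act A B) B \<le> A"
  using le_mcolon_iff[OF assms] by blast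

lemma multiplication_module_eq_colon_top:
  assumes "L_module act" "multiplication_module act"
  shows "act (mcolon act N top) top = N"
proof (rule order.antisym)
  show "act (mcolon act N top) top \<le> N" by (rule act_mcolon_le[OF assms(1)])
  obtain b where b: "N = act b top"
    using assms(2) unfolding multiplication_module_def by blast
  then have "b \<le> mcolon act N top" using le_mcolon_iff[OF assms(1)] by simp
  from L_module_act_mono_left[OF assms(1) this, of top] show "N \<le> act (mcolon act N top) top"
    by (simp only: b[symmetric])
qed

lemma le_lrad_if_power_le:
  fixes a c :: "'a::{complete_lattice, comm_monoid_mult}"
  assumes "mult_lattice TYPE('a)" "n \<ge> 1" "a ^ n \<le> c"
  shows "a \<le> lrad c"
proof -
  have "a = Sup {x. compact_el x \<and> x \<le> a}"
    using assms(1) unfolding mult_lattice_def by blast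
  also have "\<dots> \<le> lrad c" unfolding lrad_def
  proof (rule Sup_subset_mono, rule subsetI, elim CollectE conjE)
    fix x assume "compact_el x" "x \<le> a"
    moreover have "x ^ n \<le> c"
      using mult_lattice_power_mono[OF assms(1) \<open>x \<le> a\<close>] assms(3) by (rule order.trans)
    ultimately show "x \<in> {x. compact_el x \<and> (\<exists>n::nat. n \<ge> 1 \<and> x ^ n \<le> c)}"
      using assms(2) by blast
  qed
  finally show ?thesis .
qed

lemma prime_el_act_power_le:
  assumes "L_module act" "prime_el act N" "act (x ^ n) top \<le> N"
  shows "act x top \<le> N"
  using assms(3)
proof (induction n)
  case 0
  then have "N = top" using assms(1) unfolding L_module_def by (simp add: top_unique)
  then show ?case by simp
next
  case (Suc n)
  then have "act x (act (x ^ n) top) \<le> N" by (simp add: L_module_act_mult[OF assms(1)])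
  then have "act (x ^ n) top \<le> N \<or> act x top \<le> N"
    using assms(2) unfolding prime_el_def by blast
  then show ?case using Suc.IH by blast
qed

lemma prime_el_act_lrad_le:
  assumes "L_module act" "prime_el act N" "act c top \<le> N"
  shows "act (lrad c) top \<le> N"
proof -
  have "act (lrad c) top
      = Sup ((\<lambda>x. act x top) ` {x. compact_el x \<and> (\<exists>n::nat. n \<ge> 1 \<and> x ^ n \<le> c)})"
    using assms(1) unfolding L_module_def lrad_def by blast
  also have "\<dots> \<le> N"
  proof (rule Sup_least, clarify)
    fix x n assume "x ^ n \<le> c"
    have "act (x ^ n) top \<le> N"
      using L_module_act_mono_left[OF assms(1) \<open>x ^ n \<le> c\<close>] assms(3) by (rule order.trans)
    then show "act x top \<le> N" by (rule prime_el_act_power_le[OF assms(1,2)])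
  qed
  finally show ?thesis .
qed

theorem theorem3p20:
  fixes act :: "'a::{complete_lattice, comm_monoid_mult} \<Rightarrow> 'm::complete_lattice \<Rightarrow> 'm"
    and N :: 'm
  assumes "mult_lattice TYPE('a)"
    and "L_module act"
    and "multiplication_module act"
    and "N < top"
  shows "N \<le> delta1 act (act (mcolon act N top) N) \<and>
         (prime_el act N \<longrightarrow> N = delta1 act (act (mcolon act N top) N))"
proof -
  define a where "a = mcolon act N top"
  define c where "c = mcolon act (act a N) top"
  have N: "N = act a top"
    unfolding a_def using multiplication_module_eq_colon_top[OF assms(2,3)] by simp
  have "act (a ^ 2) top = act a N"
    by (simp add: N power2_eq_square L_module_act_mult[OF assms(2)])
  then have "a ^ 2 \<le> c" unfolding c_def by (simp add: le_mcolon_iff[OF assms(2)])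
  then have "a \<le> lrad c" using le_lrad_if_power_le[OF assms(1), of 2] by simp
  from L_module_act_mono_left[OF assms(2) this, of top] have le: "N \<le> delta1 act (act a N)"
    unfolding delta1_def c_def[symmetric] by (simp only: N[symmetric])
  have "delta1 act (act a N) \<le> N" if "prime_el act N"
  proof -
    have "act c top \<le> act a N" unfolding c_def by (rule act_mcolon_le[OF assms(2)])
    also have "act a N \<le> N"
      by (subst (2) N) (rule L_module_act_mono_right[OF assms(2) top_greatest])
    finally show ?thesis
      unfolding delta1_def c_def[symmetric] by (rule prime_el_act_lrad_le[OF assms(2) that])
  qed
  with le show ?thesis unfolding a_def by (auto intro: order.antisym)
qed

end
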